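(* Let $R$ be a noetherian integral domain, $n\ge1$, and $R[n]=R[t]/(t^n)$. Let $p\ge1$ and, for $1\le i\le p$, let $x_i=\sum_{j=0}^{n-1}x_{i,j}t^j\in R[n]$ with $x_{i,j}\in R$. Let $I$ be the ideal of $R[n]$ generated by $x_1,\ldots,x_p$ and $I_0$ the ideal of $R$ generated by $x_{1,0},\ldots,x_{p,0}$. Then: (i) $(x_1,\ldots,x_p)$ is a regular sequence in $R[n]$ if and only if $(x_{1,0},\ldots,x_{p,0})$ is a regular sequence in $R$; (ii) if $(x_1,\ldots,x_p)$ is a regular sequence in $R[n]$, then for every $y\in R$, $t^{n-1}y\in I$ if and only if $y\in I_0$. *)

theory Defs
  imports "HOL-Computational_Algebra.Polynomial"
begin

definition ideal_gen :: "'a::comm_ring_1 list \<Rightarrow> 'a set" where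
  "ideal_gen xs = {(\<Sum>i<length xs. c i * xs ! i) | c. True}"

definition is_ideal :: "'a::comm_ring_1 set \<Rightarrow> bool" where
  "is_ideal I \<longleftrightarrow> 0 \<in> I \<and> (\<forall>a\<in>I. \<forall>b\<in>I. a + b \<in> I) \<and> (\<forall>r. \<forall>a\<in>I. r * a \<in> I)"

definition noetherian_ring :: "'a::comm_ring_1 itself \<Rightarrow> bool" where
  "noetherian_ring _ \<longleftrightarrow> (\<forall>I::'a set. is_ideal I \<longrightarrow> (\<exists>xs. I = ideal_gen xs))"

text \<open>Regular sequence in the quotient ring A/J, where J = ideal_gen js, expressed
  through representatives in A: each x_i is a non-zero-divisor on
  (A/J)/(x_1,...,x_{i-1}) = A/(J + (x_1,...,x_{i-1})), and
  (A/J)/(x_1,...,x_p) is nonzero.\<close>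
definition regular_seq_mod :: "'a::comm_ring_1 list \<Rightarrow> 'a list \<Rightarrow> bool" where
  "regular_seq_mod js xs \<longleftrightarrow>
     (\<forall>i<length xs. \<forall>f. xs ! i * f \<in> ideal_gen (js @ take i xs) \<longrightarrow> f \<in> ideal_gen (js @ take i xs))
     \<and> 1 \<notin> ideal_gen (js @ xs)"

definition regular_seq :: "'a::comm_ring_1 list \<Rightarrow> bool" where
  "regular_seq xs \<longleftrightarrow> regular_seq_mod [] xs"

end

theory Submission
  imports Defs
begin

text \<open>
  Work with representatives in R[t], the ideal K = (t^n, x_1, ..., x_k) and the
  ideal I = (x_{1,0}, ..., x_{k,0}) of constant terms. Membership lifts from R to
  R[t]/(t^n) one t-adic degree at a time: if the coefficient of t^r in h lies in I,
  subtracting t^r times a suitable combination of the x_i raises the order of h.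
  Conversely, if the constant terms form a regular sequence, the lowest coefficient
  of an element of K of order m < n lies in I; by induction on k, the multiplier of
  x_k is pushed to order m, because x_{k,0} is a non-zero-divisor modulo
  (x_{1,0}, ..., x_{k-1,0}). These two facts transfer the non-zero-divisor
  conditions in both directions, and applied to t^(n-1) y they give (ii).
\<close>

global_interpretation ideal: module "(*) :: 'a::comm_ring_1 \<Rightarrow> 'a \<Rightarrow> 'a"
  by standard (simp_all add: algebra_simps)

lemma ideal_gen_eq_span: "ideal_gen xs = ideal.span (set xs)"
proof
  show "ideal_gen xs \<subseteq> ideal.span (set xs)"
    unfolding ideal_gen_def by (auto intro!: ideal.span_sum ideal.span_scale intro: ideal.span_base)
next
  show "ideal.span (set xs) \<subseteq> ideal_gen xs"
  proof
    fix a assume "a \<in> ideal.span (set xs)"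
    then show "a \<in> ideal_gen xs"
    proof (induction rule: ideal.span_induct_alt)
      case base
      show ?case unfolding ideal_gen_def by (auto intro!: exI[of _ "\<lambda>_. 0"])
    next
      case (step c x y)
      obtain i where i: "i < length xs" "xs ! i = x"
        using step.hyps(1) by (auto simp: in_set_conv_nth)
      obtain d where "y = (\<Sum>j<length xs. d j * xs ! j)"
        using step.IH unfolding ideal_gen_def by auto
      with i have "c * x + y = (\<Sum>j<length xs. d j * xs ! j + (if j = i then c * xs ! j else 0))"
        by (simp add: sum.distrib)
      also have "\<dots> = (\<Sum>j<length xs. (d j + (if j = i then c else 0)) * xs ! j)"
        by (intro sum.cong) (simp_all add: distrib_right)
      finally show ?case unfolding ideal_gen_def by auto
    qed
  qed
qed

lemma monom_1_dvd_le: "monom 1 m dvd f \<Longrightarrow> r \<le> m \<Longrightarrow> monom 1 r dvd f"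
  by (simp add: monom_1_dvd_iff')

lemma monom_1_dvd_Suc: "monom 1 r dvd f \<Longrightarrow> coeff f r = 0 \<Longrightarrow> monom 1 (Suc r) dvd f"
  by (auto simp: monom_1_dvd_iff' less_Suc_eq)

lemma coeff_mult_monom_1_dvd:
  assumes "monom 1 r dvd a"
  shows "coeff (a * b) r = coeff a r * coeff b 0"
proof -
  from assms obtain q where "a = monom 1 r * q" by (rule dvdE)
  then show ?thesis by (simp add: coeff_monom_mult coeff_mult_0 mult.assoc)
qed

lemma span_coeff_0_image:
  fixes S :: "'a::comm_ring_1 poly set"
  shows "ideal.span ((\<lambda>q. coeff q 0) ` S) = (\<lambda>g. coeff g 0) ` ideal.span S"
proof (intro equalityI subsetI)
  fix c assume "c \<in> ideal.span ((\<lambda>q. coeff q 0) ` S)"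
  then show "c \<in> (\<lambda>g. coeff g 0) ` ideal.span S"
  proof (induction rule: ideal.span_induct_alt)
    case base
    show ?case using ideal.span_zero by force
  next
    case (step c x y)
    then obtain q g where "q \<in> S" "x = coeff q 0" "g \<in> ideal.span S" "y = coeff g 0"
      by auto
    then have "[:c:] * q + g \<in> ideal.span S"
      by (intro ideal.span_add ideal.span_scale) (auto intro: ideal.span_base)
    moreover have "c * x + y = coeff ([:c:] * q + g) 0"
      using \<open>x = coeff q 0\<close> \<open>y = coeff g 0\<close> by simp
    ultimately show ?case by blast
  qed
next
  fix c assume "c \<in> (\<lambda>g. coeff g 0) ` ideal.span S"
  then obtain g where "g \<in> ideal.span S" "c = coeff g 0" by blast
  then show "c \<in> ideal.span ((\<lambda>q. coeff q 0) ` S)"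
  proof (induction arbitrary: c rule: ideal.span_induct_alt)
    case base
    then show ?case by (simp add: ideal.span_zero)
  next
    case (step a q g)
    then show ?case
      by (auto simp: coeff_mult_0 intro!: ideal.span_add ideal.span_scale intro: ideal.span_base)
  qed
qed

lemma coeff_0_mem_span_insert_monom:
  fixes S :: "'a::comm_ring_1 poly set"
  assumes "n \<ge> 1" "f \<in> ideal.span (insert (monom 1 n) S)"
  shows "coeff f 0 \<in> ideal.span ((\<lambda>q. coeff q 0) ` S)"
proof -
  from assms(2) obtain k where "f - k * monom 1 n \<in> ideal.span S"
    by (auto simp: ideal.span_insert)
  moreover have "coeff (f - k * monom 1 n) 0 = coeff f 0"
    using assms(1) by (simp add: coeff_mult_0)
  ultimately show ?thesis by (metis span_coeff_0_image image_eqI)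
qed

lemma approximation_step:
  fixes S :: "'a::comm_ring_1 poly set"
  assumes "monom 1 r dvd h" "coeff h r \<in> ideal.span ((\<lambda>q. coeff q 0) ` S)"
  obtains g where "g \<in> ideal.span S" "monom 1 (Suc r) dvd h - g"
proof -
  from assms(2) obtain g where g: "g \<in> ideal.span S" "coeff g 0 = coeff h r"
    by (auto simp: span_coeff_0_image)
  have "monom 1 r * g \<in> ideal.span S"
    using g(1) by (rule ideal.span_scale)
  moreover have "monom 1 (Suc r) dvd h - monom 1 r * g"
    using assms(1) g(2) by (intro monom_1_dvd_Suc) (simp_all add: coeff_monom_mult)
  ultimately show ?thesis by (rule that)
qed

lemma successive_approximation:
  fixes S :: "'a::comm_ring_1 poly set"
  assumes "P a"
    and closed: "\<And>a g. P a \<Longrightarrow> g \<in> ideal.span S \<Longrightarrow> P (a - g)"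
    and leading: "\<And>a r. P a \<Longrightarrow> monom 1 r dvd a \<Longrightarrow> r < N
      \<Longrightarrow> coeff a r \<in> ideal.span ((\<lambda>q. coeff q 0) ` S)"
  obtains g where "g \<in> ideal.span S" "P (a - g)" "monom 1 N dvd a - g"
proof -
  have "\<exists>g \<in> ideal.span S. P (a - g) \<and> monom 1 r dvd a - g" if "r \<le> N" for r
    using that
  proof (induction r)
    case 0
    show ?case using \<open>P a\<close> by (intro bexI[of _ 0]) (simp_all add: ideal.span_zero)
  next
    case (Suc r)
    then obtain g where g: "g \<in> ideal.span S" "P (a - g)" "monom 1 r dvd a - g" by auto
    moreover have "coeff (a - g) r \<in> ideal.span ((\<lambda>q. coeff q 0) ` S)"
      using leading[OF g(2,3)] Suc.prems by simp
    then obtain h where "h \<in> ideal.span S" "monom 1 (Suc r) dvd a - g - h"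
      using approximation_step g(3) by blast
    ultimately show ?case
      using closed[OF g(2)] by (intro bexI[of _ "g + h"]) (auto simp: diff_diff_eq intro: ideal.span_add)
  qed
  then show ?thesis using that by blast
qed

lemma mem_span_insert_monom_if_dvd_diff:
  assumes "g \<in> ideal.span S" "monom 1 n dvd h - g"
  shows "h \<in> ideal.span (insert (monom 1 n) S)"
proof -
  from assms(2) obtain k where "h = k * monom 1 n + g"
    by (metis dvdE mult.commute diff_eq_eq)
  moreover have "k * monom 1 n \<in> ideal.span (insert (monom 1 n) S)"
    by (intro ideal.span_scale ideal.span_base) simp
  moreover have "g \<in> ideal.span (insert (monom 1 n) S)"
    using assms(1) ideal.span_mono[of S] by blast
  ultimately show ?thesis by (simp add: ideal.span_add)
qed

lemma mem_span_insert_monom_if_top_coeff: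
  fixes S :: "'a::comm_ring_1 poly set"
  assumes "n \<ge> 1" "monom 1 (n - 1) dvd h" "coeff h (n - 1) \<in> ideal.span ((\<lambda>q. coeff q 0) ` S)"
  shows "h \<in> ideal.span (insert (monom 1 n) S)"
proof -
  obtain g where "g \<in> ideal.span S" "monom 1 (Suc (n - 1)) dvd h - g"
    using approximation_step assms(2,3) by blast
  with assms(1) show ?thesis by (simp add: mem_span_insert_monom_if_dvd_diff)
qed

lemma one_mem_span_insert_monom_iff:
  fixes S :: "'a::comm_ring_1 poly set"
  assumes "n \<ge> 1"
  shows "1 \<in> ideal.span (insert (monom 1 n) S) \<longleftrightarrow> 1 \<in> ideal.span ((\<lambda>q. coeff q 0) ` S)"
proof
  assume "1 \<in> ideal.span (insert (monom 1 n) S)"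
  from coeff_0_mem_span_insert_monom[OF assms this]
  show "1 \<in> ideal.span ((\<lambda>q. coeff q 0) ` S)" by simp
next
  assume "1 \<in> ideal.span ((\<lambda>q. coeff q 0) ` S)"
  then have "c \<in> ideal.span ((\<lambda>q. coeff q 0) ` S)" for c
    using ideal.span_scale[of 1 _ c] by simp
  then obtain g where "g \<in> ideal.span S" "monom 1 n dvd 1 - g"
    using successive_approximation[of "\<lambda>_. True"] by blast
  then show "1 \<in> ideal.span (insert (monom 1 n) S)"
    by (rule mem_span_insert_monom_if_dvd_diff)
qed

definition nonzerodivisor_mod :: "'a::comm_ring_1 set \<Rightarrow> 'a \<Rightarrow> bool" where
  "nonzerodivisor_mod I x \<longleftrightarrow> (\<forall>f. x * f \<in> I \<longrightarrow> f \<in> I)"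

definition weakly_regular_seq_mod :: "'a::comm_ring_1 list \<Rightarrow> 'a list \<Rightarrow> bool" where
  "weakly_regular_seq_mod js xs \<longleftrightarrow>
     (\<forall>i<length xs. nonzerodivisor_mod (ideal_gen (js @ take i xs)) (xs ! i))"

lemma regular_seq_mod_iff_weakly_regular:
  "regular_seq_mod js xs \<longleftrightarrow> weakly_regular_seq_mod js xs \<and> 1 \<notin> ideal_gen (js @ xs)"
  unfolding regular_seq_mod_def weakly_regular_seq_mod_def nonzerodivisor_mod_def by blast

lemma weakly_regular_seq_mod_Nil [simp]: "weakly_regular_seq_mod js []"
  by (simp add: weakly_regular_seq_mod_def)

lemma weakly_regular_seq_mod_snoc [simp]:
  "weakly_regular_seq_mod js (xs @ [x]) \<longleftrightarrow>
     weakly_regular_seq_mod js xs \<and> nonzerodivisor_mod (ideal_gen (js @ xs)) x"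
  by (auto simp: weakly_regular_seq_mod_def less_Suc_eq nth_append)

abbreviation const_coeffs :: "'a::zero poly list \<Rightarrow> 'a list" where
  "const_coeffs L \<equiv> map (\<lambda>q. coeff q 0) L"

lemma leading_coeff_mem_span_insert:
  fixes S :: "'a::comm_ring_1 poly set" and n :: nat
  defines "K \<equiv> ideal.span (insert (monom 1 n) S)" and "I \<equiv> ideal.span ((\<lambda>q. coeff q 0) ` S)"
  assumes IH: "\<And>f' m'. f' \<in> K \<Longrightarrow> monom 1 m' dvd f' \<Longrightarrow> m' < n \<Longrightarrow> coeff f' m' \<in> I"
    and nzd: "nonzerodivisor_mod I (coeff x 0)"
    and f: "f \<in> ideal.span (insert x (insert (monom 1 n) S))" "monom 1 m dvd f" "m < n"
  shows "coeff f m \<in> ideal.span (insert (coeff x 0) ((\<lambda>q. coeff q 0) ` S))"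
proof -
  from f(1) obtain a where a: "f - a * x \<in> K"
    by (auto simp: K_def ideal.span_insert)
  have "ideal.span S \<subseteq> K"
    unfolding K_def by (rule ideal.span_mono) auto
  then have closed: "f - (a - g) * x \<in> K" if "f - a * x \<in> K" "g \<in> ideal.span S" for a g
    using ideal.span_add[OF that(1)[unfolded K_def], of "x * g"] ideal.span_scale[OF that(2), of x]
    unfolding K_def by (auto simp: algebra_simps)
  have leading: "coeff a r \<in> I" if "f - a * x \<in> K" "monom 1 r dvd a" "r < m" for a r
  proof -
    have "monom 1 r dvd f - a * x"
      using monom_1_dvd_le[OF f(2)] that(2,3) by (simp add: dvd_diff dvd_mult2)
    then have "coeff (f - a * x) r \<in> I"
      by (rule IH[OF that(1)]) (use that(3) f(3) in simp)
    moreover have "coeff f r = 0"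
      using f(2) that(3) by (simp add: monom_1_dvd_iff')
    ultimately have "- (coeff x 0 * coeff a r) \<in> I"
      by (simp add: coeff_mult_monom_1_dvd[OF that(2)] mult.commute)
    then have "coeff x 0 * coeff a r \<in> I"
      using ideal.span_neg[of "- (coeff x 0 * coeff a r)"] unfolding I_def by simp
    with nzd show ?thesis by (simp add: nonzerodivisor_mod_def)
  qed
  obtain g where "g \<in> ideal.span S" and g: "f - (a - g) * x \<in> K" "monom 1 m dvd a - g"
    by (rule successive_approximation[where P = "\<lambda>a. f - a * x \<in> K", OF a closed leading[unfolded I_def]])
  define a' where "a' = a - g"
  have "monom 1 m dvd f - a' * x"
    using f(2) g(2) by (simp add: a'_def dvd_diff dvd_mult2)
  then have "coeff (f - a' * x) m \<in> I"
    by (rule IH[OF g(1)[folded a'_def] _ f(3)])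
  moreover have "I \<subseteq> ideal.span (insert (coeff x 0) ((\<lambda>q. coeff q 0) ` S))"
    unfolding I_def by (rule ideal.span_mono) auto
  moreover have "coeff a' m * coeff x 0 \<in> ideal.span (insert (coeff x 0) ((\<lambda>q. coeff q 0) ` S))"
    by (intro ideal.span_scale ideal.span_base) simp
  ultimately have "coeff (f - a' * x) m + coeff a' m * coeff x 0
      \<in> ideal.span (insert (coeff x 0) ((\<lambda>q. coeff q 0) ` S))"
    by (blast intro: ideal.span_add)
  moreover have "coeff f m = coeff (f - a' * x) m + coeff a' m * coeff x 0"
    using g(2) by (simp add: a'_def coeff_mult_monom_1_dvd)
  ultimately show ?thesis by (simp only:)
qed

lemma leading_coeff_mem_ideal_const_coeffs:
  fixes L :: "'a::comm_ring_1 poly list"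
  assumes "weakly_regular_seq_mod [] (const_coeffs L)"
    and "f \<in> ideal_gen (monom 1 n # L)" "monom 1 m dvd f" "m < n"
  shows "coeff f m \<in> ideal_gen (const_coeffs L)"
  using assms
proof (induction L arbitrary: f m rule: rev_induct)
  case Nil
  then have "monom 1 n dvd f"
    by (auto simp: ideal_gen_eq_span ideal.span_singleton)
  with Nil.prems(4) show ?case
    by (simp add: monom_1_dvd_iff' ideal_gen_eq_span ideal.span_zero)
next
  case (snoc x L)
  have "coeff f' m' \<in> ideal.span ((\<lambda>q. coeff q 0) ` set L)"
    if "f' \<in> ideal.span (insert (monom 1 n) (set L))" "monom 1 m' dvd f'" "m' < n" for f' m'
    using snoc.IH[of f' m'] snoc.prems(1) that by (simp add: ideal_gen_eq_span)
  moreover have "nonzerodivisor_mod (ideal.span ((\<lambda>q. coeff q 0) ` set L)) (coeff x 0)"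
    using snoc.prems(1) by (simp add: ideal_gen_eq_span)
  moreover have "f \<in> ideal.span (insert x (insert (monom 1 n) (set L)))"
    using snoc.prems(2) by (simp add: ideal_gen_eq_span insert_commute)
  ultimately have "coeff f m \<in> ideal.span (insert (coeff x 0) ((\<lambda>q. coeff q 0) ` set L))"
    using snoc.prems(3,4) by (rule leading_coeff_mem_span_insert)
  then show ?case by (simp add: ideal_gen_eq_span)
qed

lemma nonzerodivisor_mod_truncation:
  fixes L :: "'a::comm_ring_1 poly list"
  assumes wr: "weakly_regular_seq_mod [] (const_coeffs L)"
    and nzd: "nonzerodivisor_mod (ideal_gen (const_coeffs L)) (coeff x 0)"
  shows "nonzerodivisor_mod (ideal_gen (monom 1 n # L)) x"
  unfolding nonzerodivisor_mod_def
proof (intro allI impI)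
  define K where "K = ideal_gen (monom 1 n # L)"
  fix f assume xf: "x * f \<in> ideal_gen (monom 1 n # L)"
  have span_L: "ideal.span (set L) \<subseteq> K"
    unfolding K_def ideal_gen_eq_span by (rule ideal.span_mono) auto
  have closed: "x * (a - g) \<in> K" if "x * a \<in> K" "g \<in> ideal.span (set L)" for a g
  proof -
    have "x * g \<in> K" using ideal.span_scale[OF that(2)] span_L by blast
    with that(1) have "x * a - x * g \<in> K"
      unfolding K_def ideal_gen_eq_span by (rule ideal.span_diff)
    then show ?thesis by (simp add: right_diff_distrib)
  qed
  have leading: "coeff a r \<in> ideal.span ((\<lambda>q. coeff q 0) ` set L)"
    if "x * a \<in> K" "monom 1 r dvd a" "r < n" for a r
  proof -
    have "coeff (x * a) r \<in> ideal_gen (const_coeffs L)"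
      using leading_coeff_mem_ideal_const_coeffs[OF wr] that by (simp add: K_def dvd_mult)
    moreover have "coeff (x * a) r = coeff x 0 * coeff a r"
      using coeff_mult_monom_1_dvd[OF that(2), of x] by (metis mult.commute)
    ultimately have "coeff x 0 * coeff a r \<in> ideal_gen (const_coeffs L)"
      by simp
    with nzd show ?thesis by (simp add: nonzerodivisor_mod_def ideal_gen_eq_span)
  qed
  obtain g where "g \<in> ideal.span (set L)" "monom 1 n dvd f - g"
    by (rule successive_approximation[where P = "\<lambda>a. x * a \<in> K", OF xf[folded K_def] closed leading])
  then show "f \<in> ideal_gen (monom 1 n # L)"
    unfolding ideal_gen_eq_span list.set(2) by (rule mem_span_insert_monom_if_dvd_diff)
qed

lemma monom_mem_ideal_truncation_iff:
  fixes L :: "'a::comm_ring_1 poly list"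
  assumes "n \<ge> 1" "weakly_regular_seq_mod [] (const_coeffs L)"
  shows "monom y (n - 1) \<in> ideal_gen (monom 1 n # L) \<longleftrightarrow> y \<in> ideal_gen (const_coeffs L)"
proof
  assume "monom y (n - 1) \<in> ideal_gen (monom 1 n # L)"
  from leading_coeff_mem_ideal_const_coeffs[OF assms(2) this, of "n - 1"] assms(1)
  show "y \<in> ideal_gen (const_coeffs L)" by (simp add: monom_1_dvd_iff')
next
  assume y: "y \<in> ideal_gen (const_coeffs L)"
  have "monom 1 (n - 1) dvd monom y (n - 1)"
    by (simp add: monom_1_dvd_iff')
  moreover have "coeff (monom y (n - 1)) (n - 1) \<in> ideal.span ((\<lambda>q. coeff q 0) ` set L)"
    using y by (simp add: ideal_gen_eq_span)
  ultimately show "monom y (n - 1) \<in> ideal_gen (monom 1 n # L)"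
    unfolding ideal_gen_eq_span list.set(2)
    by (rule mem_span_insert_monom_if_top_coeff[OF assms(1)])
qed

lemma nonzerodivisor_mod_const_coeff:
  fixes L :: "'a::comm_ring_1 poly list"
  assumes "n \<ge> 1" "weakly_regular_seq_mod [] (const_coeffs L)"
    and "nonzerodivisor_mod (ideal_gen (monom 1 n # L)) x"
  shows "nonzerodivisor_mod (ideal_gen (const_coeffs L)) (coeff x 0)"
  unfolding nonzerodivisor_mod_def
proof (intro allI impI)
  fix y assume y: "coeff x 0 * y \<in> ideal_gen (const_coeffs L)"
  have "monom 1 (n - 1) dvd monom y (n - 1) * x"
    by (simp add: monom_1_dvd_iff' coeff_monom_mult)
  moreover have "coeff (monom y (n - 1) * x) (n - 1) \<in> ideal.span ((\<lambda>q. coeff q 0) ` set L)"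
    unfolding coeff_monom_mult using y by (simp add: ideal_gen_eq_span mult.commute)
  ultimately have "monom y (n - 1) * x \<in> ideal_gen (monom 1 n # L)"
    unfolding ideal_gen_eq_span list.set(2)
    by (rule mem_span_insert_monom_if_top_coeff[OF assms(1)])
  with assms(3) have "monom y (n - 1) \<in> ideal_gen (monom 1 n # L)"
    unfolding nonzerodivisor_mod_def by (metis mult.commute)
  with monom_mem_ideal_truncation_iff[OF assms(1,2)]
  show "y \<in> ideal_gen (const_coeffs L)" by blast
qed

lemma weakly_regular_seq_mod_truncation_iff:
  fixes L :: "'a::comm_ring_1 poly list"
  assumes "n \<ge> 1"
  shows "weakly_regular_seq_mod [monom 1 n] L \<longleftrightarrow> weakly_regular_seq_mod [] (const_coeffs L)"
proof (induction L rule: rev_induct)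
  case Nil
  show ?case by simp
next
  case (snoc x L)
  have "weakly_regular_seq_mod [monom 1 n] (L @ [x]) \<longleftrightarrow>
      weakly_regular_seq_mod [monom 1 n] L \<and> nonzerodivisor_mod (ideal_gen (monom 1 n # L)) x"
    by simp
  also have "\<dots> \<longleftrightarrow> weakly_regular_seq_mod [] (const_coeffs L)
      \<and> nonzerodivisor_mod (ideal_gen (const_coeffs L)) (coeff x 0)"
    using snoc.IH nonzerodivisor_mod_truncation nonzerodivisor_mod_const_coeff[OF assms] by blast
  also have "\<dots> \<longleftrightarrow> weakly_regular_seq_mod [] (const_coeffs (L @ [x]))"
    by simp
  finally show ?case .
qed

lemma regular_seq_mod_truncation_iff:
  fixes L :: "'a::comm_ring_1 poly list"
  assumes "n \<ge> 1"
  shows "regular_seq_mod [monom 1 n] L \<longleftrightarrow> regular_seq (const_coeffs L)"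
  using weakly_regular_seq_mod_truncation_iff[OF assms, of L]
    one_mem_span_insert_monom_iff[OF assms, of "set L"]
  unfolding regular_seq_def regular_seq_mod_iff_weakly_regular ideal_gen_eq_span
  by simp

theorem proposition3p7p1:
  fixes x :: "nat \<Rightarrow> nat \<Rightarrow> 'a::idom" and n p :: nat
    and X :: "'a poly list" and X0 :: "'a list"
  assumes noeth: "noetherian_ring TYPE('a)"
    and n: "n \<ge> 1" and p: "p \<ge> 1"
    and X_def: "X = map (\<lambda>i. \<Sum>j<n. monom (x i j) j) [1..<p+1]"
    and X0_def: "X0 = map (\<lambda>i. x i 0) [1..<p+1]"
  shows "(regular_seq_mod [monom 1 n] X \<longleftrightarrow> regular_seq X0)
    \<and> (regular_seq_mod [monom 1 n] X \<longrightarrow>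
         (\<forall>y::'a. monom y (n - 1) \<in> ideal_gen (monom 1 n # X) \<longleftrightarrow> y \<in> ideal_gen X0))"
proof -
  have X0: "X0 = const_coeffs X"
    unfolding X0_def X_def using n by (simp add: coeff_sum)
  have regular_iff: "regular_seq_mod [monom 1 n] X \<longleftrightarrow> regular_seq X0"
    unfolding X0 by (rule regular_seq_mod_truncation_iff[OF n])
  moreover have "monom y (n - 1) \<in> ideal_gen (monom 1 n # X) \<longleftrightarrow> y \<in> ideal_gen X0"
    if "regular_seq_mod [monom 1 n] X" for y
  proof -
    have "weakly_regular_seq_mod [] (const_coeffs X)"
      using that regular_iff unfolding X0 regular_seq_def regular_seq_mod_iff_weakly_regular by blast
    then show ?thesis unfolding X0 by (rule monom_mem_ideal_truncation_iff[OF n])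
  qed
  ultimately show ?thesis by blast
qed

end
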